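(* Let $G$ be a finite group which is an $\mathcal{L}(\operatorname{Aut}(G))$-equational domain. Let $H=\prod_{i\in\mathbb{Z}}G$ be the direct power of $G$ indexed by $\mathbb{Z}$, with elements $(g_i\mid i\in\mathbb{Z})$. For $\phi\in\operatorname{Aut}(G)$ let $f_\phi((g_i\mid i\in\mathbb{Z}))=(\phi(g_i)\mid i\in\mathbb{Z})$, let $\sigma((g_i\mid i\in\mathbb{Z}))=(g_{i+1}\mid i\in\mathbb{Z})$, and let $A\subseteq\operatorname{Aut}(H)$ be the group generated by $\sigma$ and all $f_\phi$, $\phi\in\operatorname{Aut}(G)$. Then the $\mathcal{L}(A)$-group $H$ is $\mathbf{q}_\omega$-compact.
   Context: For a group $K$ and a subgroup $B\subseteq\operatorname{Aut}(K)$, $\mathcal{L}(B)=\{\cdot,{}^{-1},1\}\cup\{\psi\mid\psi\in B\}$ is the group language with a unary function symbol for each $\psi\in B$, interpreted as $\psi$. An $\mathcal{L}(B)$-equation in variables $X=\{x_1,\dots,x_n\}$ is $t(X)=1$ with $t$ an $\mathcal{L}(B)$-term (equivalently a product $\psi_1(x_{i_1}^{\varepsilon_1})\cdots\psi_k(x_{i_k}^{\varepsilon_k})$, $\psi_j\in B$, $\varepsilon_j=\pm1$); an $\mathcal{L}(B)$-system is any set of such equations, and $V_K(S)\subseteq K^n$ is its solution set. $K$ is an $\mathcal{L}(B)$-equational domain if for every $n$ the union of any two subsets of $K^n$ of the form $V_K(S)$ is again of this form. The $\mathcal{L}(B)$-group $K$ is $\mathbf{q}_\omega$-compact if for every $\mathcal{L}(B)$-system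 $S$ and every $\mathcal{L}(B)$-equation $w(X)=1$ with $V_K(S)\subseteq V_K(w(X)=1)$ there is a finite subsystem $S'\subseteq S$ with $V_K(S')\subseteq V_K(w(X)=1)$. *)

theory Defs
  imports "HOL-Algebra.Algebra"
begin

text \<open>Terms of the group language L(B): variables x_0, x_1, ..., the constant 1,
  multiplication, inversion, and a unary function symbol for each psi (the symbol
  is the function itself; membership in B is checked by lterm_over).\<close>
datatype 'f lterm = LVar nat | LOne | LMul "'f lterm" "'f lterm" | LInv "'f lterm"
  | LApp 'f "'f lterm"

fun lterm_over :: "'f set \<Rightarrow> nat \<Rightarrow> 'f lterm \<Rightarrow> bool" where
  "lterm_over B n (LVar i) = (i < n)"
| "lterm_over B n LOne = True"
| "lterm_over B n (LMul s t) = (lterm_over B n s \<and> lterm_over B n t)"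
| "lterm_over B n (LInv t) = lterm_over B n t"
| "lterm_over B n (LApp f t) = (f \<in> B \<and> lterm_over B n t)"

fun leval :: "('a, 'b) monoid_scheme \<Rightarrow> (nat \<Rightarrow> 'a) \<Rightarrow> ('a \<Rightarrow> 'a) lterm \<Rightarrow> 'a" where
  "leval K x (LVar i) = x i"
| "leval K x LOne = \<one>\<^bsub>K\<^esub>"
| "leval K x (LMul s t) = leval K x s \<otimes>\<^bsub>K\<^esub> leval K x t"
| "leval K x (LInv t) = inv\<^bsub>K\<^esub> (leval K x t)"
| "leval K x (LApp f t) = f (leval K x t)"

definition tuples :: "('a, 'b) monoid_scheme \<Rightarrow> nat \<Rightarrow> (nat \<Rightarrow> 'a) set" where
  "tuples K n = PiE {..<n} (\<lambda>_. carrier K)"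

text \<open>An L(B)-system in n variables: a set of terms t, standing for equations t = 1.\<close>
definition lsystem :: "('a \<Rightarrow> 'a) set \<Rightarrow> nat \<Rightarrow> ('a \<Rightarrow> 'a) lterm set \<Rightarrow> bool" where
  "lsystem B n S \<longleftrightarrow> (\<forall>t\<in>S. lterm_over B n t)"

definition solset :: "('a, 'b) monoid_scheme \<Rightarrow> nat \<Rightarrow> ('a \<Rightarrow> 'a) lterm set \<Rightarrow> (nat \<Rightarrow> 'a) set" where
  "solset K n S = {x \<in> tuples K n. \<forall>t\<in>S. leval K x t = \<one>\<^bsub>K\<^esub>}"

definition equational_domain :: "('a, 'b) monoid_scheme \<Rightarrow> ('a \<Rightarrow> 'a) set \<Rightarrow> bool" where
  "equational_domain K B \<longleftrightarrow>
     (\<forall>n S1 S2. lsystem B n S1 \<and> lsystem B n S2 \<longrightarrow>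
        (\<exists>S. lsystem B n S \<and> solset K n S1 \<union> solset K n S2 = solset K n S))"

definition q_omega_compact :: "('a, 'b) monoid_scheme \<Rightarrow> ('a \<Rightarrow> 'a) set \<Rightarrow> bool" where
  "q_omega_compact K B \<longleftrightarrow>
     (\<forall>n S w. lsystem B n S \<and> lterm_over B n w \<and> solset K n S \<subseteq> solset K n {w} \<longrightarrow>
        (\<exists>S'. S' \<subseteq> S \<and> finite S' \<and> solset K n S' \<subseteq> solset K n {w}))"

definition dir_power_int :: "('a, 'b) monoid_scheme \<Rightarrow> (int \<Rightarrow> 'a) monoid" where
  "dir_power_int G =
    \<lparr>carrier = {g. \<forall>i. g i \<in> carrier G},
     monoid.mult = (\<lambda>g h i. g i \<otimes>\<^bsub>G\<^esub> h i),
     one = (\<lambda>i. \<one>\<^bsub>G\<^esub>)\<rparr>"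

definition coord_auto :: "('a, 'b) monoid_scheme \<Rightarrow> ('a \<Rightarrow> 'a) \<Rightarrow> (int \<Rightarrow> 'a) \<Rightarrow> (int \<Rightarrow> 'a)" where
  "coord_auto G \<phi> = (\<lambda>g \<in> carrier (dir_power_int G). (\<lambda>i. \<phi> (g i)))"

definition shift_auto :: "('a, 'b) monoid_scheme \<Rightarrow> (int \<Rightarrow> 'a) \<Rightarrow> (int \<Rightarrow> 'a)" where
  "shift_auto G = (\<lambda>g \<in> carrier (dir_power_int G). (\<lambda>i. g (i + 1)))"

definition shift_group :: "('a, 'b) monoid_scheme \<Rightarrow> ((int \<Rightarrow> 'a) \<Rightarrow> (int \<Rightarrow> 'a)) set" where
  "shift_group G = generate (AutoGroup (dir_power_int G))
     (insert (shift_auto G) (coord_auto G ` auto G))"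

end

theory Submission
  imports Defs "HOL-Analysis.Function_Topology" "HOL-Analysis.Product_Topology"
begin

(* Give G the discrete topology and H^n = (G^Z)^n the product topology, which is compact by
   Tychonoff because G is finite.  Every element of A acts as g \<mapsto> (\<phi> (g (i + k)))_i, so each
   coordinate of the value of a term is a locally constant function of the arguments, and the
   sets where it equals 1 are clopen.  Compactness yields a finite S' \<subseteq> S all of whose solutions
   satisfy w(x)_0 = 1; as solution sets of A-systems are invariant under shifting all arguments,
   they satisfy w(x)_i = 1 for every i. *)

lemma carrier_dir_power_int [simp]: "carrier (dir_power_int G) = {g. \<forall>i. g i \<in> carrier G}"
  and one_dir_power_int [simp]: "\<one>\<^bsub>dir_power_int G\<^esub> = (\<lambda>i. \<one>\<^bsub>G\<^esub>)"
  and mult_dir_power_int [simp]: "g \<otimes>\<^bsub>dir_power_int G\<^esub> h = (\<lambda>i. g i \<otimes>\<^bsub>G\<^esub> h i)"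
  by (simp_all add: dir_power_int_def)

lemma dir_power_int_eq_product_group: "dir_power_int G = product_group UNIV (\<lambda>_. G)"
  by (simp add: dir_power_int_def product_group_def PiE_UNIV_domain Pi_def restrict_UNIV)

lemma group_dir_power_int: "group G \<Longrightarrow> group (dir_power_int G)"
  by (simp add: dir_power_int_eq_product_group)

lemma inv_dir_power_int:
  "\<lbrakk>group G; g \<in> carrier (dir_power_int G)\<rbrakk> \<Longrightarrow> inv\<^bsub>dir_power_int G\<^esub> g = (\<lambda>i. inv\<^bsub>G\<^esub> g i)"
  by (simp add: dir_power_int_eq_product_group PiE_UNIV_domain Pi_def restrict_UNIV)

lemma carrier_AutoGroup [simp]: "carrier (AutoGroup K) = auto K"
  by (simp add: AutoGroup_def)

definition shift_coord_auto :: "('a, 'b) monoid_scheme \<Rightarrow> int \<Rightarrow> ('a \<Rightarrow> 'a) \<Rightarrow> (int \<Rightarrow> 'a) \<Rightarrow> (int \<Rightarrow> 'a)"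
  where "shift_coord_auto G k \<phi> = (\<lambda>g \<in> carrier (dir_power_int G). \<lambda>i. \<phi> (g (i + k)))"

definition shift_coord_autos :: "('a, 'b) monoid_scheme \<Rightarrow> ((int \<Rightarrow> 'a) \<Rightarrow> (int \<Rightarrow> 'a)) set"
  where "shift_coord_autos G = {shift_coord_auto G k \<phi> | k \<phi>. \<phi> \<in> auto G}"

lemma shift_coord_auto_apply:
  "g \<in> carrier (dir_power_int G) \<Longrightarrow> shift_coord_auto G k \<phi> g = (\<lambda>i. \<phi> (g (i + k)))"
  by (simp add: shift_coord_auto_def)

lemma shift_coord_auto_in_auto:
  assumes "group G" and \<phi>: "\<phi> \<in> auto G"
  shows "shift_coord_auto G k \<phi> \<in> auto (dir_power_int G)"
proof -
  interpret group G by fact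
  have \<phi>_bij: "bij_betw \<phi> (carrier G) (carrier G)" and \<phi>_hom: "\<phi> \<in> hom G G"
    using \<phi> by (auto simp: auto_def Bij_def)
  let ?\<psi> = "inv_into (carrier G) \<phi>"
  have "bij_betw (shift_coord_auto G k \<phi>) (carrier (dir_power_int G)) (carrier (dir_power_int G))"
  proof (rule bij_betw_byWitness[where f' = "\<lambda>g i. ?\<psi> (g (i - k))"])
    show "\<forall>g\<in>carrier (dir_power_int G). (\<lambda>i. ?\<psi> (shift_coord_auto G k \<phi> g (i - k))) = g"
      using \<phi>_bij by (auto simp: shift_coord_auto_def bij_betw_def)
    show "\<forall>g\<in>carrier (dir_power_int G). shift_coord_auto G k \<phi> (\<lambda>i. ?\<psi> (g (i - k))) = g"
      using \<phi>_bij by (auto simp: shift_coord_auto_def bij_betw_def f_inv_into_f inv_into_into)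
    show "shift_coord_auto G k \<phi> ` carrier (dir_power_int G) \<subseteq> carrier (dir_power_int G)"
      using \<phi>_bij by (auto simp: shift_coord_auto_def bij_betw_def)
    show "(\<lambda>g i. ?\<psi> (g (i - k))) ` carrier (dir_power_int G) \<subseteq> carrier (dir_power_int G)"
      using \<phi>_bij by (auto simp: bij_betw_def inv_into_into)
  qed
  moreover have "shift_coord_auto G k \<phi> \<in> hom (dir_power_int G) (dir_power_int G)"
    using \<phi>_hom by (auto simp: hom_def shift_coord_auto_def Pi_def)
  ultimately show ?thesis
    by (auto simp: auto_def Bij_def shift_coord_auto_def)
qed

lemma shift_coord_auto_mult:
  assumes "group G" and "\<phi> \<in> auto G" and "\<psi> \<in> auto G"
  shows "shift_coord_auto G k \<phi> \<otimes>\<^bsub>AutoGroup (dir_power_int G)\<^esub> shift_coord_auto G l \<psi>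
       = shift_coord_auto G (k + l) (\<phi> \<otimes>\<^bsub>AutoGroup G\<^esub> \<psi>)"
proof -
  have "\<psi> a \<in> carrier G" if "a \<in> carrier G" for a
    using assms(3) that by (auto simp: auto_def hom_def)
  then show ?thesis
    using assms shift_coord_auto_in_auto[OF assms(1)]
    by (auto simp: AutoGroup_def BijGroup_def auto_def compose_def shift_coord_auto_def add.assoc
        intro!: restrict_ext)
qed

lemma shift_coord_auto_hom:
  assumes "group G"
  shows "(\<lambda>(k, \<phi>). shift_coord_auto G k \<phi>) \<in> hom (integer_group \<times>\<times> AutoGroup G) (AutoGroup (dir_power_int G))"
  using assms by (auto simp: hom_def mult_DirProd' shift_coord_auto_in_auto shift_coord_auto_mult)

lemma shift_group_subset_shift_coord_autos:
  assumes "group G"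
  shows "shift_group G \<subseteq> shift_coord_autos G"
proof -
  interpret group_hom "integer_group \<times>\<times> AutoGroup G" "AutoGroup (dir_power_int G)"
      "\<lambda>(k, \<phi>). shift_coord_auto G k \<phi>"
    using assms by (intro group_hom.intro group_hom_axioms.intro DirProd_group group.AutoGroup
        group_dir_power_int shift_coord_auto_hom) simp_all
  have image: "(\<lambda>(k, \<phi>). shift_coord_auto G k \<phi>) ` carrier (integer_group \<times>\<times> AutoGroup G)
      = shift_coord_autos G"
    by (auto simp: shift_coord_autos_def)
  have "shift_auto G = shift_coord_auto G 1 (\<one>\<^bsub>AutoGroup G\<^esub>)"
    by (auto simp: shift_auto_def shift_coord_auto_def AutoGroup_def BijGroup_def)
  moreover have "\<one>\<^bsub>AutoGroup G\<^esub> \<in> auto G"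
    using group.AutoGroup[OF assms] by (metis carrier_AutoGroup group.is_monoid monoid.one_closed)
  moreover have "coord_auto G \<phi> = shift_coord_auto G 0 \<phi>" for \<phi>
    by (simp add: coord_auto_def shift_coord_auto_def)
  ultimately have generators: "insert (shift_auto G) (coord_auto G ` auto G) \<subseteq> shift_coord_autos G"
    by (auto simp: shift_coord_autos_def)
  show ?thesis
    unfolding shift_group_def
    using H.generate_subgroup_incl[OF _ img_is_subgroup] generators image
      shift_coord_auto_in_auto[OF assms]
    by (auto simp: shift_coord_autos_def)
qed

lemma lterm_over_mono: "\<lbrakk>lterm_over B n t; B \<subseteq> B'\<rbrakk> \<Longrightarrow> lterm_over B' n t"
  by (induction t) auto

lemma leval_in_carrier:
  assumes "group K" and "B \<subseteq> auto K" and "x \<in> tuples K n" and "lterm_over B n t"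
  shows "leval K x t \<in> carrier K"
  using assms(4)
proof (induction t)
  case (LApp f t)
  then show ?case using assms(2) by (auto simp: auto_def hom_def)
qed (use assms in \<open>auto simp: tuples_def group.is_monoid monoid.m_closed\<close>)

lemma leval_dir_power_int_in_carrier:
  assumes "group G" and "x \<in> tuples (dir_power_int G) n" and "lterm_over (shift_coord_autos G) n t"
  shows "leval (dir_power_int G) x t \<in> carrier (dir_power_int G)"
  using assms shift_coord_auto_in_auto
  by (intro leval_in_carrier[where B = "shift_coord_autos G"])
    (auto simp: group_dir_power_int shift_coord_autos_def)

lemma leval_coordinate_simps:
  assumes "group G" and "x \<in> tuples (dir_power_int G) n"
  shows "leval (dir_power_int G) x (LMul s t) i = leval (dir_power_int G) x s i \<otimes>\<^bsub>G\<^esub> leval (dir_power_int G) x t i"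
    and "lterm_over (shift_coord_autos G) n t \<Longrightarrow>
      leval (dir_power_int G) x (LInv t) i = inv\<^bsub>G\<^esub> leval (dir_power_int G) x t i"
    and "lterm_over (shift_coord_autos G) n t \<Longrightarrow>
      leval (dir_power_int G) x (LApp (shift_coord_auto G k \<phi>) t) i = \<phi> (leval (dir_power_int G) x t (i + k))"
  using leval_dir_power_int_in_carrier[OF assms]
  by (simp_all add: inv_dir_power_int[OF assms(1)] shift_coord_auto_apply del: carrier_dir_power_int)

definition shift_tuple :: "nat \<Rightarrow> int \<Rightarrow> (nat \<Rightarrow> int \<Rightarrow> 'a) \<Rightarrow> (nat \<Rightarrow> int \<Rightarrow> 'a)"
  where "shift_tuple n c x = (\<lambda>v \<in> {..<n}. \<lambda>j. x v (j + c))"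

lemma shift_tuple_in_tuples:
  "x \<in> tuples (dir_power_int G) n \<Longrightarrow> shift_tuple n c x \<in> tuples (dir_power_int G) n"
  by (auto simp: shift_tuple_def tuples_def)

lemma leval_shift_tuple:
  assumes "group G" and x: "x \<in> tuples (dir_power_int G) n"
    and "lterm_over (shift_coord_autos G) n t"
  shows "leval (dir_power_int G) (shift_tuple n c x) t = (\<lambda>j. leval (dir_power_int G) x t (j + c))"
  using assms(3)
proof (induction t)
  case (LVar v)
  then show ?case by (simp add: shift_tuple_def)
next
  case (LInv t)
  then show ?case
    by (intro ext) (simp add: leval_coordinate_simps(2)[OF assms(1) x]
        leval_coordinate_simps(2)[OF assms(1) shift_tuple_in_tuples[OF x]] del: leval.simps)
next
  case (LApp f t)
  then obtain k \<phi> where "f = shift_coord_auto G k \<phi>" by (auto simp: shift_coord_autos_def)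
  with LApp show ?case
    by (intro ext) (simp add: leval_coordinate_simps(3)[OF assms(1) x]
        leval_coordinate_simps(3)[OF assms(1) shift_tuple_in_tuples[OF x]] ac_simps del: leval.simps)
qed simp_all

lemma mem_solset_dir_power_int:
  "x \<in> solset (dir_power_int G) n S \<longleftrightarrow>
     x \<in> tuples (dir_power_int G) n \<and> (\<forall>t\<in>S. \<forall>i. leval (dir_power_int G) x t i = \<one>\<^bsub>G\<^esub>)"
  by (auto simp: solset_def)

lemma shift_tuple_in_solset:
  assumes "group G" and "lsystem (shift_coord_autos G) n S" and "x \<in> solset (dir_power_int G) n S"
  shows "shift_tuple n c x \<in> solset (dir_power_int G) n S"
  using assms leval_shift_tuple[OF assms(1)] shift_tuple_in_tuples
  by (auto simp: mem_solset_dir_power_int lsystem_def)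

definition tuple_topology :: "('a, 'b) monoid_scheme \<Rightarrow> nat \<Rightarrow> (nat \<Rightarrow> int \<Rightarrow> 'a) topology"
  where "tuple_topology G n =
    product_topology (\<lambda>v. product_topology (\<lambda>i. discrete_topology (carrier G)) UNIV) {..<n}"

lemma topspace_tuple_topology: "topspace (tuple_topology G n) = tuples (dir_power_int G) n"
  by (auto simp: tuple_topology_def tuples_def PiE_def Pi_def)

lemma compact_space_tuple_topology: "finite (carrier G) \<Longrightarrow> compact_space (tuple_topology G n)"
  by (simp add: tuple_topology_def compact_space_product_topology compact_space_discrete_topology)

lemma continuous_map_coordinate_tuple_topology:
  assumes "v < n"
  shows "continuous_map (tuple_topology G n) (discrete_topology (carrier G)) (\<lambda>x. x v i)"
proof -
  have row: "continuous_map (tuple_topology G n)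
      (product_topology (\<lambda>i. discrete_topology (carrier G)) UNIV) (\<lambda>x. x v)"
    unfolding tuple_topology_def using assms by (intro continuous_map_product_projection) simp
  have entry: "continuous_map (product_topology (\<lambda>i. discrete_topology (carrier G)) UNIV)
      (discrete_topology (carrier G)) (\<lambda>g. g i)"
    by (intro continuous_map_product_projection) simp
  from continuous_map_compose[OF row entry] show ?thesis
    by (simp add: o_def)
qed

lemma continuous_map_discrete_topology_compose:
  assumes "continuous_map T (discrete_topology A) f" and "h \<in> A \<rightarrow> A"
  shows "continuous_map T (discrete_topology A) (\<lambda>x. h (f x))"
  using continuous_map_compose[OF assms(1), of "discrete_topology A" h] assms(2) by (simp add: o_def)

lemma continuous_map_discrete_topology_binop:
  assumes "continuous_map T (discrete_topology A) f" and "continuous_map T (discrete_topology A) g"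
    and "\<And>a b. \<lbrakk>a \<in> A; b \<in> A\<rbrakk> \<Longrightarrow> h a b \<in> A"
  shows "continuous_map T (discrete_topology A) (\<lambda>x. h (f x) (g x))"
proof -
  have pair: "continuous_map T (discrete_topology (A \<times> A)) (\<lambda>x. (f x, g x))"
    using assms by (simp add: prod_topology_discrete_topology continuous_map_pairedI)
  have "continuous_map (discrete_topology (A \<times> A)) (discrete_topology A) (case_prod h)"
    using assms(3) by auto
  from continuous_map_compose[OF pair this] show ?thesis
    by (simp add: o_def)
qed

lemma continuous_map_leval_coordinate:
  assumes "group G" and "lterm_over (shift_coord_autos G) n t"
  shows "continuous_map (tuple_topology G n) (discrete_topology (carrier G))
           (\<lambda>x. leval (dir_power_int G) x t i)"
  using assms(2)
proof (induction t arbitrary: i)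
  case (LVar v)
  then show ?case by (simp add: continuous_map_coordinate_tuple_topology)
next
  case LOne
  then show ?case by (simp add: assms group.is_monoid monoid.one_closed)
next
  case (LMul s t)
  then show ?case
    by (simp add: continuous_map_discrete_topology_binop[where h = "(\<otimes>\<^bsub>G\<^esub>)"]
        assms group.is_monoid monoid.m_closed)
next
  case (LInv t)
  then have "continuous_map (tuple_topology G n) (discrete_topology (carrier G))
      (\<lambda>x. inv\<^bsub>G\<^esub> leval (dir_power_int G) x t i)"
    using assms by (intro continuous_map_discrete_topology_compose[where h = "m_inv G"])
      (auto simp: group.inv_closed)
  then show ?case
    by (rule continuous_map_eq) (use LInv in
      \<open>simp add: leval_coordinate_simps(2) assms topspace_tuple_topology del: leval.simps\<close>)
next
  case (LApp f t)
  then obtain k \<phi> where f: "f = shift_coord_auto G k \<phi>" and "\<phi> \<in> auto G"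
    by (auto simp: shift_coord_autos_def)
  then have "\<phi> \<in> carrier G \<rightarrow> carrier G" by (auto simp: auto_def hom_def)
  with LApp have "continuous_map (tuple_topology G n) (discrete_topology (carrier G))
      (\<lambda>x. \<phi> (leval (dir_power_int G) x t (i + k)))"
    by (intro continuous_map_discrete_topology_compose[where h = \<phi>]) simp_all
  then show ?case
    by (rule continuous_map_eq) (use LApp in
      \<open>simp add: f leval_coordinate_simps(3) assms topspace_tuple_topology del: leval.simps\<close>)
qed

lemma finite_subsystem_forces_coordinate:
  assumes "group G" and "finite (carrier G)"
    and S: "lsystem (shift_coord_autos G) n S" and w: "lterm_over (shift_coord_autos G) n w"
    and forces: "\<forall>x\<in>solset (dir_power_int G) n S. leval (dir_power_int G) x w i = \<one>\<^bsub>G\<^esub>"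
  shows "\<exists>S'\<subseteq>S. finite S' \<and>
           (\<forall>x\<in>solset (dir_power_int G) n S'. leval (dir_power_int G) x w i = \<one>\<^bsub>G\<^esub>)"
proof -
  let ?H = "dir_power_int G" and ?T = "tuple_topology G n"
  define E where "E t j = {x \<in> topspace ?T. leval ?H x t j = \<one>\<^bsub>G\<^esub>}" for t j
  define C where "C = {x \<in> topspace ?T. leval ?H x w i \<in> carrier G - {\<one>\<^bsub>G\<^esub>}}"
  have "closedin ?T (E t j)" if "t \<in> S" for t j
  proof -
    have "lterm_over (shift_coord_autos G) n t"
      using S that by (simp add: lsystem_def)
    then show ?thesis
      using closedin_continuous_map_preimage[OF continuous_map_leval_coordinate[OF assms(1)], where C = "{\<one>\<^bsub>G\<^esub>}"]
        assms(1) by (simp add: E_def group.is_monoid)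
  qed
  then have closed_E: "\<forall>Z\<in>case_prod E ` (S \<times> UNIV). closedin ?T Z"
    by auto
  have "closedin ?T C"
    unfolding C_def
    by (rule closedin_continuous_map_preimage[OF continuous_map_leval_coordinate[OF assms(1) w]]) auto
  then have "compactin ?T C"
    using compact_space_tuple_topology[OF assms(2)] by (simp add: closedin_compact_space)
  moreover have "C \<inter> \<Inter>(case_prod E ` (S \<times> UNIV)) = {}"
    using forces by (auto simp: C_def E_def mem_solset_dir_power_int topspace_tuple_topology)
  ultimately obtain \<F> where "finite \<F>" "\<F> \<subseteq> case_prod E ` (S \<times> UNIV)" and disjoint: "C \<inter> \<Inter>\<F> = {}"
    using closed_E unfolding compactin_fip by blast
  then obtain P where P: "P \<subseteq> S \<times> UNIV" "finite P" "\<F> = case_prod E ` P"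
    by (meson finite_subset_image)
  show ?thesis
  proof (intro exI conjI ballI)
    show "fst ` P \<subseteq> S" "finite (fst ` P)"
      using P by auto
    fix x assume x: "x \<in> solset ?H n (fst ` P)"
    then have "x \<in> \<Inter>\<F>"
      using P by (force simp: E_def mem_solset_dir_power_int topspace_tuple_topology)
    moreover have "leval ?H x w i \<in> carrier G"
      using leval_dir_power_int_in_carrier[OF assms(1) _ w] x by (auto simp: mem_solset_dir_power_int)
    ultimately show "leval ?H x w i = \<one>\<^bsub>G\<^esub>"
      using disjoint x by (auto simp: C_def topspace_tuple_topology mem_solset_dir_power_int)
  qed
qed

lemma solset_subset_if_coordinate_zero:
  assumes "group G" and S: "lsystem (shift_coord_autos G) n S"
    and w: "lterm_over (shift_coord_autos G) n w"
    and at_origin: "\<forall>x\<in>solset (dir_power_int G) n S. leval (dir_power_int G) x w 0 = \<one>\<^bsub>G\<^esub>"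
  shows "solset (dir_power_int G) n S \<subseteq> solset (dir_power_int G) n {w}"
proof
  let ?H = "dir_power_int G"
  fix x assume x: "x \<in> solset ?H n S"
  have "leval ?H x w c = \<one>\<^bsub>G\<^esub>" for c
  proof -
    have "leval ?H x w c = leval ?H (shift_tuple n c x) w 0"
      using leval_shift_tuple[OF assms(1) _ w] x by (simp add: mem_solset_dir_power_int)
    also have "\<dots> = \<one>\<^bsub>G\<^esub>"
      using at_origin shift_tuple_in_solset[OF assms(1) S x] by blast
    finally show ?thesis .
  qed
  then show "x \<in> solset ?H n {w}"
    using x by (simp add: mem_solset_dir_power_int)
qed

theorem lemma5:
  fixes G :: "('a, 'b) monoid_scheme"
  assumes "group G"
    and "finite (carrier G)"
    and "equational_domain G (auto G)"
  shows "q_omega_compact (dir_power_int G) (shift_group G)"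
  unfolding q_omega_compact_def
proof (intro allI impI, elim conjE)
  fix n S w
  assume S: "lsystem (shift_group G) n S" and w: "lterm_over (shift_group G) n w"
    and implies: "solset (dir_power_int G) n S \<subseteq> solset (dir_power_int G) n {w}"
  let ?H = "dir_power_int G" and ?B = "shift_coord_autos G"
  have S_system: "lsystem ?B n S" and w_term: "lterm_over ?B n w"
    using S w lterm_over_mono[OF _ shift_group_subset_shift_coord_autos[OF assms(1)]]
    by (auto simp: lsystem_def)
  have "\<forall>x\<in>solset ?H n S. leval ?H x w 0 = \<one>\<^bsub>G\<^esub>"
    using implies by (auto simp: mem_solset_dir_power_int)
  then obtain S' where S': "S' \<subseteq> S" "finite S'"
    and "\<forall>x\<in>solset ?H n S'. leval ?H x w 0 = \<one>\<^bsub>G\<^esub>"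
    using finite_subsystem_forces_coordinate[OF assms(1,2) S_system w_term] by blast
  moreover have "lsystem ?B n S'"
    using S_system S' by (auto simp: lsystem_def)
  ultimately have "solset ?H n S' \<subseteq> solset ?H n {w}"
    using solset_subset_if_coordinate_zero[OF assms(1) _ w_term] by blast
  then show "\<exists>S'\<subseteq>S. finite S' \<and> solset ?H n S' \<subseteq> solset ?H n {w}"
    using S' by blast
qed

end
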